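(* Let $(X,\rho)$ be a geodesic metric space. (i) If $X$ is an $\mathbb R$-tree, then for every point $o\in X$ there exists a unique partial order $\preceq$ on $X$ such that $(X,\rho,\preceq)$ is an upper-semilinear metric $\vee$-semilattice with root $o$. Moreover, in this order every nonempty subset $A\subset X$ has a supremum. (ii) Conversely, if $X$ admits a partial order $\preceq$ such that $(X,\rho,\preceq)$ is an upper-semilinear metric $\vee$-semilattice, then $X$ is an $\mathbb R$-tree.
   Context: A segment $[xy]$ in a metric space is the image of a map $\gamma:[\alpha,\beta]\to X$ with $\rho(\gamma(s),\gamma(t))=|s-t|$ for all $s,t$, $\gamma(\alpha)=x$, $\gamma(\beta)=y$. A metric space is geodesic if any two points are joined by a segment. A geodesic metric space $X$ is an $\mathbb R$-tree if any two points are joined by a unique segment and, for all $x,y,z\in X$, $[xy]\subset[xz]\cup[zy]$. For a partial order $\preceq$ on $X$, the pair $(X,\preceq)$ is a $\vee$-semilattice if any two points $x,y$ have a supremum $x\vee y$. The triple $(X,\rho,\preceq)$ is a metric $\vee$-semilattice if $(X,\preceq)$ is a $\vee$-semilattice and (1) for all $x,y,z$ with $x\preceq z\preceq y$ one has $\rho(x,z)+\rho(z,y)=\rho(x,y)$, and (2) for all $x,y$ one has $\rho(x,y)=\rho(x,x\vee y)+\rho(x\vee y,y)$. The order is upper-semilinear if for every $x$ the upper cone $U_x=\{y\in X: x\preceq y\}$ is linearly ordered. "With root $o$" means that $o$ is the greatest element of $(X,\preceq)$. *)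

theory Defs
  imports "HOL-Analysis.Analysis"
begin

text \<open>The metric space (X, rho) is the type 'a of class metric_space, with rho = dist and X = UNIV.\<close>

definition is_segment :: "'a::metric_space \<Rightarrow> 'a \<Rightarrow> 'a set \<Rightarrow> bool" where
  "is_segment x y S \<longleftrightarrow>
     (\<exists>(\<gamma>::real \<Rightarrow> 'a) \<alpha> \<beta>. \<alpha> \<le> \<beta> \<and>
        (\<forall>s\<in>{\<alpha>..\<beta>}. \<forall>t\<in>{\<alpha>..\<beta>}. dist (\<gamma> s) (\<gamma> t) = \<bar>s - t\<bar>) \<and>
        \<gamma> \<alpha> = x \<and> \<gamma> \<beta> = y \<and> S = \<gamma> ` {\<alpha>..\<beta>})"

definition geodesic_space :: "'a::metric_space itself \<Rightarrow> bool" where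
  "geodesic_space _ \<longleftrightarrow> (\<forall>x y::'a. \<exists>S. is_segment x y S)"

definition R_tree :: "'a::metric_space itself \<Rightarrow> bool" where
  "R_tree T \<longleftrightarrow> geodesic_space T \<and>
     (\<forall>x y::'a. \<exists>!S. is_segment x y S) \<and>
     (\<forall>x y z::'a. \<forall>Sxy Sxz Szy. is_segment x y Sxy \<and> is_segment x z Sxz \<and> is_segment z y Szy
        \<longrightarrow> Sxy \<subseteq> Sxz \<union> Szy)"

definition partial_order_rel :: "('a \<Rightarrow> 'a \<Rightarrow> bool) \<Rightarrow> bool" where
  "partial_order_rel le \<longleftrightarrow> (\<forall>x. le x x) \<and> (\<forall>x y. le x y \<and> le y x \<longrightarrow> x = y) \<and>
     (\<forall>x y z. le x y \<and> le y z \<longrightarrow> le x z)"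

definition is_sup :: "('a \<Rightarrow> 'a \<Rightarrow> bool) \<Rightarrow> 'a set \<Rightarrow> 'a \<Rightarrow> bool" where
  "is_sup le A s \<longleftrightarrow> (\<forall>a\<in>A. le a s) \<and> (\<forall>u. (\<forall>a\<in>A. le a u) \<longrightarrow> le s u)"

definition join_semilattice :: "('a \<Rightarrow> 'a \<Rightarrow> bool) \<Rightarrow> bool" where
  "join_semilattice le \<longleftrightarrow> partial_order_rel le \<and> (\<forall>x y. \<exists>s. is_sup le {x, y} s)"

definition join :: "('a \<Rightarrow> 'a \<Rightarrow> bool) \<Rightarrow> 'a \<Rightarrow> 'a \<Rightarrow> 'a" where
  "join le x y = (THE s. is_sup le {x, y} s)"

definition metric_join_semilattice :: "('a::metric_space \<Rightarrow> 'a \<Rightarrow> bool) \<Rightarrow> bool" where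
  "metric_join_semilattice le \<longleftrightarrow> join_semilattice le \<and>
     (\<forall>x y z. le x z \<and> le z y \<longrightarrow> dist x z + dist z y = dist x y) \<and>
     (\<forall>x y. dist x y = dist x (join le x y) + dist (join le x y) y)"

definition upper_semilinear :: "('a \<Rightarrow> 'a \<Rightarrow> bool) \<Rightarrow> bool" where
  "upper_semilinear le \<longleftrightarrow> (\<forall>x y z. le x y \<and> le x z \<longrightarrow> le y z \<or> le z y)"

definition has_root :: "('a \<Rightarrow> 'a \<Rightarrow> bool) \<Rightarrow> 'a \<Rightarrow> bool" where
  "has_root le r \<longleftrightarrow> (\<forall>x. le x r)"

end

theory Submission imports Defs begin

(* In a metric join-semilattice whose upper cones are chains, p lies metrically between x and y
   (rho(x,p) + rho(p,y) = rho(x,y)) iff p lies on one of the two chains from x and from y up to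
   x \<squnion> y.  On such a chain a point is determined by its distance to the lower end, so every
   segment [x,y] is exactly the set of points between x and y; uniqueness of segments and the
   inclusion [x,y] \<subseteq> [x,z] \<union> [z,y] follow from this description.
   Conversely, in an R-tree a rooted order with these properties must be "x below y iff y lies on
   [x,o]", since o is the join of any point with o.  This order is a metric join-semilattice:
   suprema are found as lowest common upper bounds along a segment [a,o], and x \<squnion> y lies on [x,y]
   because the connected set [x,y] is covered by the two closed cones above x and above y. *)

definition metric_between :: "'a::metric_space \<Rightarrow> 'a \<Rightarrow> 'a \<Rightarrow> bool" where
  "metric_between x y p \<longleftrightarrow> dist x p + dist p y = dist x y"

lemma metric_between_commute: "metric_between x y p \<longleftrightarrow> metric_between y x p"
  unfolding metric_between_def by (simp add: dist_commute add.commute)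

lemma closed_metric_between: "closed {p. metric_between x y p}"
  unfolding metric_between_def by (rule closed_Collect_eq) (intro continuous_intros)+

lemma metric_between_squeeze:
  assumes "metric_between x y p" "metric_between x p q" "metric_between p y q"
  shows "q = p"
proof -
  have "dist x y \<le> dist x q + dist q y" by (rule dist_triangle)
  then have "dist q p + dist p q \<le> 0" using assms unfolding metric_between_def by linarith
  then show ?thesis by (simp add: dist_commute)
qed

definition root_order :: "'a::metric_space \<Rightarrow> 'a \<Rightarrow> 'a \<Rightarrow> bool" where
  "root_order r x y \<longleftrightarrow> metric_between x r y"

lemma root_order_partial_order: "partial_order_rel (root_order r)"
  unfolding partial_order_rel_def root_order_def metric_between_def
proof (intro conjI allI impI)
  fix x y :: 'a
  assume "dist x y + dist y r = dist x r \<and> dist y x + dist x r = dist y r"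
  then have "dist x y = 0" using dist_commute[of x y] by linarith
  then show "x = y" by simp
next
  fix x y z :: 'a
  assume "dist x y + dist y r = dist x r \<and> dist y z + dist z r = dist y r"
  moreover have "dist x z \<le> dist x y + dist y z" "dist x r \<le> dist x z + dist z r"
    by (rule dist_triangle)+
  ultimately show "dist x z + dist z r = dist x r" by linarith
qed simp

lemma has_root_root_order: "has_root (root_order r) r"
  unfolding has_root_def root_order_def metric_between_def by simp

lemma root_order_between:
  assumes "root_order r x z" "root_order r z y"
  shows "metric_between x y z"
proof -
  have "dist x r \<le> dist x y + dist y r" "dist x y \<le> dist x z + dist z y" by (rule dist_triangle)+
  then show ?thesis using assms unfolding root_order_def metric_between_def by linarith
qed

definition isometric_on :: "real set \<Rightarrow> (real \<Rightarrow> 'a::metric_space) \<Rightarrow> bool" where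
  "isometric_on I g \<longleftrightarrow> (\<forall>s\<in>I. \<forall>t\<in>I. dist (g s) (g t) = \<bar>s - t\<bar>)"

lemma is_segment_iff:
  "is_segment x y S \<longleftrightarrow>
     (\<exists>g a b. a \<le> b \<and> isometric_on {a..b} g \<and> g a = x \<and> g b = y \<and> S = g ` {a..b})"
  unfolding is_segment_def isometric_on_def ..

lemma isometric_on_continuous_on: "isometric_on I g \<Longrightarrow> continuous_on I g"
  by (rule lipschitz_on_continuous_on[of 1])
    (auto intro: lipschitz_onI simp: isometric_on_def dist_real_def)

lemma isometric_on_between:
  assumes "isometric_on I g" "s \<in> I" "t \<in> I" "u \<in> I" "s \<le> t" "t \<le> u"
  shows "metric_between (g s) (g u) (g t)"
  using assms unfolding isometric_on_def metric_between_def by auto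

lemma is_segment_endpoints:
  assumes "is_segment x y S" shows "x \<in> S" "y \<in> S"
  using assms unfolding is_segment_iff by auto

lemma is_segment_between:
  assumes "is_segment x y S" "p \<in> S" shows "metric_between x y p"
  using assms unfolding is_segment_iff by (auto intro: isometric_on_between)

lemma is_segment_connected: "is_segment x y S \<Longrightarrow> connected S"
  unfolding is_segment_iff by (auto intro!: connected_continuous_image isometric_on_continuous_on)

lemma is_segment_point_at_dist:
  assumes "is_segment x y S" "0 \<le> t" "t \<le> dist x y"
  obtains p where "p \<in> S" "dist x p = t"
proof -
  obtain g a b where g: "a \<le> b" "isometric_on {a..b} g" "g a = x" "g b = y" "S = g ` {a..b}"
    using assms(1) unfolding is_segment_iff by blast
  then have "dist x y = b - a" unfolding isometric_on_def by force
  then have "a + t \<in> {a..b}" using assms by simp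
  with g show ?thesis
    by (intro that[of "g (a + t)"]) (auto simp: isometric_on_def)
qed

lemma connected_closed_cover_meet:
  assumes "connected S" "closed A" "closed B" "S \<subseteq> A \<union> B" "x \<in> S \<inter> A" "y \<in> S \<inter> B"
  obtains q where "q \<in> S" "q \<in> A" "q \<in> B"
  using assms unfolding connected_closed by blast

lemma R_tree_intro:
  assumes geo: "geodesic_space TYPE('a::metric_space)"
    and seg: "\<And>(x::'a) y S. is_segment x y S \<Longrightarrow> S = {p. metric_between x y p}"
    and tri: "\<And>(x::'a) y z p. metric_between x y p \<Longrightarrow> metric_between x z p \<or> metric_between z y p"
  shows "R_tree TYPE('a)"
  unfolding R_tree_def
proof (intro conjI allI impI geo)
  fix x y :: 'a
  show "\<exists>!S. is_segment x y S"
    using geo seg unfolding geodesic_space_def by blast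
next
  fix x y z :: 'a and Sxy Sxz Szy
  assume "is_segment x y Sxy \<and> is_segment x z Sxz \<and> is_segment z y Szy"
  then show "Sxy \<subseteq> Sxz \<union> Szy" using seg tri by blast
qed

lemma R_tree_segment_exists:
  assumes "R_tree TYPE('a::metric_space)" obtains S where "is_segment (x::'a) y S"
proof -
  have "geodesic_space TYPE('a)" using assms unfolding R_tree_def by (rule conjunct1)
  then show ?thesis using that unfolding geodesic_space_def by blast
qed

lemma R_tree_segment_subset:
  fixes x y z :: "'a::metric_space"
  assumes "R_tree TYPE('a)" "is_segment x y Sxy" "is_segment x z Sxz" "is_segment z y Szy"
  shows "Sxy \<subseteq> Sxz \<union> Szy"
proof -
  have "\<forall>x y z::'a. \<forall>Sxy Sxz Szy. is_segment x y Sxy \<and> is_segment x z Sxz \<and> is_segment z y Szy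
          \<longrightarrow> Sxy \<subseteq> Sxz \<union> Szy"
    using assms(1) unfolding R_tree_def by (rule conjunct2[THEN conjunct2])
  then show ?thesis using assms(2-4) by blast
qed

text \<open>The connected segment \<open>S \<subseteq> [x,p] \<union> [p,y]\<close> meets both pieces, and a common point of
  \<open>[x,p]\<close> and \<open>[p,y]\<close> must be \<open>p\<close>.\<close>
lemma R_tree_segment_eq_between:
  fixes x y :: "'a::metric_space"
  assumes rt: "R_tree TYPE('a)" and S: "is_segment x y S"
  shows "S = {p. metric_between x y p}"
proof (intro subset_antisym subsetI CollectI)
  fix p assume "p \<in> S" then show "metric_between x y p" by (rule is_segment_between[OF S])
next
  fix p assume p: "p \<in> {p. metric_between x y p}"
  obtain Sxp where Sxp: "is_segment x p Sxp" by (rule R_tree_segment_exists[OF rt])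
  obtain Spy where Spy: "is_segment p y Spy" by (rule R_tree_segment_exists[OF rt])
  have "S \<subseteq> Sxp \<union> Spy" using R_tree_segment_subset[OF rt S Sxp Spy] .
  also have "\<dots> \<subseteq> {q. metric_between x p q} \<union> {q. metric_between p y q}"
    using is_segment_between[OF Sxp] is_segment_between[OF Spy] by blast
  finally have cover: "S \<subseteq> {q. metric_between x p q} \<union> {q. metric_between p y q}" .
  have "x \<in> S \<inter> {q. metric_between x p q}" "y \<in> S \<inter> {q. metric_between p y q}"
    using is_segment_endpoints[OF S] by (auto simp: metric_between_def)
  then obtain q where "q \<in> S" "metric_between x p q" "metric_between p y q"
    using connected_closed_cover_meet[OF is_segment_connected[OF S] closed_metric_between
        closed_metric_between cover] by blast
  then show "p \<in> S" using metric_between_squeeze p by blast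
qed

lemma R_tree_between_triangle:
  fixes x y z p :: "'a::metric_space"
  assumes rt: "R_tree TYPE('a)" and p: "metric_between x y p"
  shows "metric_between x z p \<or> metric_between z y p"
proof -
  obtain Sxy where Sxy: "is_segment x y Sxy" by (rule R_tree_segment_exists[OF rt])
  obtain Sxz where Sxz: "is_segment x z Sxz" by (rule R_tree_segment_exists[OF rt])
  obtain Szy where Szy: "is_segment z y Szy" by (rule R_tree_segment_exists[OF rt])
  have "p \<in> Sxy" using R_tree_segment_eq_between[OF rt Sxy] p by blast
  then have "p \<in> Sxz \<union> Szy" using R_tree_segment_subset[OF rt Sxy Sxz Szy] by blast
  then show ?thesis
    using R_tree_segment_eq_between[OF rt Sxz] R_tree_segment_eq_between[OF rt Szy] by blast
qed

lemma is_sup_unique: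
  assumes "partial_order_rel le" "is_sup le A s" "is_sup le A t"
  shows "s = t"
  using assms unfolding partial_order_rel_def is_sup_def by blast

lemma join_eqI:
  assumes "partial_order_rel le" "is_sup le {x, y} s"
  shows "join le x y = s"
  unfolding join_def using assms by (blast intro: the_equality is_sup_unique)

locale semilinear_metric_semilattice =
  fixes le :: "'a::metric_space \<Rightarrow> 'a \<Rightarrow> bool" (infix "\<preceq>" 50)
  assumes metric_join_semilattice: "metric_join_semilattice (\<preceq>)"
    and upper_semilinear: "upper_semilinear (\<preceq>)"
begin

abbreviation lub :: "'a \<Rightarrow> 'a \<Rightarrow> 'a" (infixl "\<squnion>" 65) where
  "x \<squnion> y \<equiv> join (\<preceq>) x y"

lemma partial_order: "partial_order_rel (\<preceq>)"
  using metric_join_semilattice unfolding metric_join_semilattice_def join_semilattice_def by blast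

lemma le_refl: "x \<preceq> x"
  using partial_order unfolding partial_order_rel_def by blast

lemma le_antisym: "x \<preceq> y \<Longrightarrow> y \<preceq> x \<Longrightarrow> x = y"
  using partial_order unfolding partial_order_rel_def by blast

lemma le_trans: "x \<preceq> y \<Longrightarrow> y \<preceq> z \<Longrightarrow> x \<preceq> z"
  using partial_order unfolding partial_order_rel_def by blast

lemma le_comparable: "x \<preceq> y \<Longrightarrow> x \<preceq> z \<Longrightarrow> y \<preceq> z \<or> z \<preceq> y"
  using upper_semilinear unfolding upper_semilinear_def by blast

lemma dist_chain: "x \<preceq> z \<Longrightarrow> z \<preceq> y \<Longrightarrow> dist x z + dist z y = dist x y"
  using metric_join_semilattice unfolding metric_join_semilattice_def by blast

lemma dist_join: "dist x y = dist x (x \<squnion> y) + dist (x \<squnion> y) y"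
  using metric_join_semilattice unfolding metric_join_semilattice_def by blast

lemma join_is_sup: "is_sup (\<preceq>) {x, y} (x \<squnion> y)"
proof -
  obtain s where "is_sup (\<preceq>) {x, y} s"
    using metric_join_semilattice unfolding metric_join_semilattice_def join_semilattice_def by blast
  with join_eqI[OF partial_order] show ?thesis by simp
qed

lemma join_upper1: "x \<preceq> x \<squnion> y" and join_upper2: "y \<preceq> x \<squnion> y"
  using join_is_sup unfolding is_sup_def by blast+

lemma join_least: "x \<preceq> u \<Longrightarrow> y \<preceq> u \<Longrightarrow> x \<squnion> y \<preceq> u"
  using join_is_sup unfolding is_sup_def by blast

lemma join_commute: "x \<squnion> y = y \<squnion> x"
  unfolding join_def by (simp add: insert_commute)

lemma between_if_chain:
  assumes "x \<preceq> z" "z \<preceq> x \<squnion> y"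
  shows "metric_between x y z"
proof -
  have "dist x z + dist z (x \<squnion> y) = dist x (x \<squnion> y)" using dist_chain assms .
  moreover have "dist z y \<le> dist z (x \<squnion> y) + dist (x \<squnion> y) y" by (rule dist_triangle)
  moreover have "dist x y \<le> dist x z + dist z y" by (rule dist_triangle)
  ultimately show ?thesis using dist_join[of x y] unfolding metric_between_def by linarith
qed

text \<open>Whichever way \<open>x \<squnion> z\<close> compares with \<open>x \<squnion> y\<close>, adding up distances along the chains
  forces \<open>z = x \<squnion> z\<close>.\<close>
lemma chain_if_between_join_le:
  assumes xzy: "metric_between x y z" and ab: "x \<squnion> z \<preceq> z \<squnion> y"
  shows "x \<preceq> z \<and> z \<preceq> x \<squnion> y"
proof -
  define a b m where "a = x \<squnion> z" and "b = z \<squnion> y" and "m = x \<squnion> y"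
  have xa: "x \<preceq> a" "z \<preceq> a" and zb: "z \<preceq> b" "y \<preceq> b" and xm: "x \<preceq> m" "y \<preceq> m"
    unfolding a_def b_def m_def by (simp_all add: join_upper1 join_upper2)
  have "a \<preceq> b" using ab unfolding a_def b_def .
  have mb: "m \<preceq> b" unfolding m_def using join_least le_trans[OF xa(1) \<open>a \<preceq> b\<close>] zb(2) by blast
  have d: "dist x z = dist x a + dist a z" "dist z y = dist z b + dist b y"
    "dist x y = dist x m + dist m y"
    unfolding a_def b_def m_def by (rule dist_join)+
  from le_comparable[OF xa(1) xm(1)] show ?thesis
  proof
    assume am: "a \<preceq> m"
    have "b \<preceq> m" unfolding b_def using join_least le_trans[OF xa(2) am] xm(2) by blast
    then have "b = m" using mb by (rule le_antisym)
    have "dist z m = dist z a + dist a m" "dist x m = dist x a + dist a m"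
      using dist_chain xa am by (metis)+
    then have "dist a z = 0"
      using xzy d[unfolded \<open>b = m\<close>] zero_le_dist[of a z] dist_commute[of z a]
      unfolding metric_between_def by linarith
    then show ?thesis using xa am m_def by simp
  next
    assume ma: "m \<preceq> a"
    have "b \<preceq> a" unfolding b_def using join_least xa(2) le_trans[OF xm(2) ma] by blast
    then have "b = a" using \<open>a \<preceq> b\<close> by (rule le_antisym)
    have "dist x a = dist x m + dist m a" "dist y a = dist y m + dist m a"
      using dist_chain xm ma by (metis)+
    then have "dist a z + dist m a = 0"
      using xzy d[unfolded \<open>b = a\<close>] dist_commute[of z a] dist_commute[of a y] dist_commute[of y m]
      unfolding metric_between_def by linarith
    then have "dist a z = 0" "dist m a = 0" using zero_le_dist[of a z] zero_le_dist[of m a] by linarith+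
    then have "z = a" "m = a" by simp_all
    then show ?thesis using xa m_def by simp
  qed
qed

lemma metric_between_iff: "metric_between x y z \<longleftrightarrow> (x \<preceq> z \<or> y \<preceq> z) \<and> z \<preceq> x \<squnion> y"
proof
  assume xzy: "metric_between x y z"
  from le_comparable[OF join_upper2 join_upper1] show "(x \<preceq> z \<or> y \<preceq> z) \<and> z \<preceq> x \<squnion> y"
  proof
    assume "x \<squnion> z \<preceq> z \<squnion> y"
    then show ?thesis using chain_if_between_join_le[OF xzy] by blast
  next
    assume "z \<squnion> y \<preceq> x \<squnion> z"
    then have "y \<squnion> z \<preceq> z \<squnion> x" by (simp only: join_commute)
    with xzy have "y \<preceq> z \<and> z \<preceq> y \<squnion> x"
      by (intro chain_if_between_join_le) (simp_all add: metric_between_commute)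
    then show ?thesis by (simp add: join_commute)
  qed
next
  assume "(x \<preceq> z \<or> y \<preceq> z) \<and> z \<preceq> x \<squnion> y"
  then consider "x \<preceq> z" "z \<preceq> x \<squnion> y" | "y \<preceq> z" "z \<preceq> y \<squnion> x"
    by (auto simp: join_commute)
  then show "metric_between x y z"
  proof cases
    case 1 then show ?thesis by (rule between_if_chain)
  next
    case 2 then show ?thesis by (subst metric_between_commute) (rule between_if_chain)
  qed
qed

lemma eq_if_above_same_dist:
  assumes "x \<preceq> p" "x \<preceq> q" "dist x p = dist x q"
  shows "p = q"
  using le_comparable[OF assms(1,2)]
proof
  assume "p \<preceq> q"
  then have "dist p q = 0" using dist_chain assms by fastforce
  then show ?thesis by simp
next
  assume "q \<preceq> p"
  then have "dist q p = 0" using dist_chain assms by fastforce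
  then show ?thesis by simp
qed

lemma eq_if_opposite_arms_same_dist:
  assumes "x \<preceq> p" "p \<preceq> x \<squnion> y" "y \<preceq> q" "q \<preceq> x \<squnion> y"
    and "metric_between x y q" "dist x p = dist x q"
  shows "p = q"
proof -
  let ?m = "x \<squnion> y"
  have "dist x p + dist p ?m = dist x ?m" "dist y q + dist q ?m = dist y ?m"
    using dist_chain assms(1-4) by blast+
  then have "dist p ?m + dist q ?m = 0"
    using assms(5,6) dist_join[of x y] dist_commute[of ?m y] dist_commute[of q y]
    unfolding metric_between_def by linarith
  then have "dist p ?m = 0" "dist q ?m = 0"
    using zero_le_dist[of p ?m] zero_le_dist[of q ?m] by linarith+
  then show ?thesis by simp
qed

lemma metric_between_eq_if_same_dist:
  fixes x y p q :: 'a
  assumes p: "metric_between x y p" and q: "metric_between x y q" and pq: "dist x p = dist x q"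
  shows "p = q"
proof -
  have pq': "dist y p = dist y q"
    using p q pq unfolding metric_between_def by (simp add: dist_commute)
  have P: "x \<preceq> p \<or> y \<preceq> p" "p \<preceq> x \<squnion> y" and Q: "x \<preceq> q \<or> y \<preceq> q" "q \<preceq> x \<squnion> y"
    using p q unfolding metric_between_iff by blast+
  from P(1) Q(1) consider "x \<preceq> p" "x \<preceq> q" | "y \<preceq> p" "y \<preceq> q" | "x \<preceq> p" "y \<preceq> q" | "y \<preceq> p" "x \<preceq> q"
    by blast
  then show ?thesis
  proof cases
    case 1 then show ?thesis using pq by (rule eq_if_above_same_dist)
  next
    case 2 then show ?thesis using pq' by (rule eq_if_above_same_dist)
  next
    case 3 then show ?thesis using P(2) Q(2) q pq eq_if_opposite_arms_same_dist[of x p y q] by simp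
  next
    case 4 then show ?thesis using P(2) Q(2) p pq eq_if_opposite_arms_same_dist[of x q y p] by simp
  qed
qed

lemma is_segment_eq_between:
  fixes x y :: 'a
  assumes S: "is_segment x y S"
  shows "S = {p. metric_between x y p}"
proof (intro subset_antisym subsetI CollectI)
  fix p assume "p \<in> S" then show "metric_between x y p" by (rule is_segment_between[OF S])
next
  fix p assume p: "p \<in> {p. metric_between x y p}"
  then have "dist x p \<le> dist x y"
    using zero_le_dist[of p y] unfolding mem_Collect_eq metric_between_def by linarith
  then obtain q where "q \<in> S" "dist x q = dist x p"
    by (rule is_segment_point_at_dist[OF S zero_le_dist])
  moreover have "metric_between x y q" using is_segment_between[OF S \<open>q \<in> S\<close>] .
  ultimately show "p \<in> S" using metric_between_eq_if_same_dist p by auto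
qed

lemma metric_between_triangle_above:
  assumes "x \<preceq> p" "p \<preceq> x \<squnion> y"
  shows "metric_between x z p \<or> metric_between z y p"
proof -
  let ?a = "x \<squnion> z" and ?b = "z \<squnion> y"
  from le_comparable[OF join_upper2 join_upper1] show ?thesis
  proof
    assume "?b \<preceq> ?a"
    then have "x \<squnion> y \<preceq> ?a" using join_least join_upper1 join_upper2 le_trans by blast
    then show ?thesis using assms le_trans unfolding metric_between_iff by blast
  next
    assume "?a \<preceq> ?b"
    then have "x \<squnion> y \<preceq> ?b" using join_least join_upper1 join_upper2 le_trans by blast
    then have "p \<preceq> ?b" using assms(2) le_trans by blast
    from le_comparable[OF assms(1) join_upper1[of x z]] show ?thesis
    proof
      assume "p \<preceq> ?a" then show ?thesis using assms(1) unfolding metric_between_iff by blast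
    next
      assume "?a \<preceq> p"
      then have "z \<preceq> p" using join_upper2 le_trans by blast
      then show ?thesis using \<open>p \<preceq> ?b\<close> unfolding metric_between_iff by blast
    qed
  qed
qed

lemma metric_between_triangle:
  fixes x y z p :: 'a
  assumes "metric_between x y p"
  shows "metric_between x z p \<or> metric_between z y p"
proof -
  from assms consider "x \<preceq> p" "p \<preceq> x \<squnion> y" | "y \<preceq> p" "p \<preceq> y \<squnion> x"
    unfolding metric_between_iff by (auto simp: join_commute)
  then show ?thesis
  proof cases
    case 1 then show ?thesis by (rule metric_between_triangle_above)
  next
    case 2 then show ?thesis
      using metric_between_triangle_above[of y p x z] metric_between_commute by blast
  qed
qed

theorem R_tree_if_geodesic:
  assumes "geodesic_space TYPE('a)"
  shows "R_tree TYPE('a)"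
  using assms is_segment_eq_between metric_between_triangle by (rule R_tree_intro)

lemma eq_root_order:
  assumes "has_root (\<preceq>) r"
  shows "(\<preceq>) = root_order r"
proof (intro ext)
  fix x y
  have "x \<preceq> r" "y \<preceq> r" using assms unfolding has_root_def by blast+
  then have "x \<squnion> r = r" using le_antisym[OF join_least[OF _ le_refl] join_upper2] by blast
  then show "x \<preceq> y \<longleftrightarrow> root_order r x y"
    unfolding root_order_def metric_between_iff using \<open>x \<preceq> r\<close> \<open>y \<preceq> r\<close> le_antisym[of r y] by auto
qed

end

lemma closed_root_order_cone: "closed {y. root_order r x y}"
  unfolding root_order_def by (rule closed_metric_between)

lemma isometric_on_root_order:
  assumes "isometric_on {a..b} g" "s \<in> {a..b}" "t \<in> {a..b}" "s \<le> t"
  shows "root_order (g b) (g s) (g t)"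
  unfolding root_order_def using assms by (intro isometric_on_between) auto

lemma R_tree_upper_cone_param:
  fixes x r :: "'a::metric_space"
  assumes "R_tree TYPE('a)"
  obtains g a b where "a \<le> b" "isometric_on {a..b} g" "g a = x" "g b = r"
    "{y. root_order r x y} = g ` {a..b}"
proof -
  obtain S where S: "is_segment x r S" by (rule R_tree_segment_exists[OF assms])
  then have "{y. root_order r x y} = S"
    unfolding root_order_def using R_tree_segment_eq_between[OF assms] by blast
  with S show ?thesis using that unfolding is_segment_iff by blast
qed

lemma R_tree_root_order_upper_semilinear:
  assumes "R_tree TYPE('a::metric_space)"
  shows "upper_semilinear (root_order (r::'a))"
  unfolding upper_semilinear_def
proof (intro allI impI)
  fix x y z :: 'a
  assume "root_order r x y \<and> root_order r x z"
  moreover obtain g a b where g: "isometric_on {a..b} g" "g b = r"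
    and cone: "{y. root_order r x y} = g ` {a..b}"
    by (rule R_tree_upper_cone_param[OF assms, of x r])
  ultimately obtain s t where "s \<in> {a..b}" "t \<in> {a..b}" "y = g s" "z = g t"
    by blast
  then show "root_order r y z \<or> root_order r z y"
    using isometric_on_root_order[OF g(1)] g(2) by (metis linear)
qed

text \<open>The supremum of \<open>A\<close> is the lowest point of the segment from some \<open>a\<^sub>0 \<in> A\<close> to the root
  that lies above all of \<open>A\<close>; it exists because the set of such parameters is closed.\<close>
lemma R_tree_root_order_has_sup:
  fixes r :: "'a::metric_space"
  assumes rt: "R_tree TYPE('a)" and "A \<noteq> {}"
  shows "\<exists>s. is_sup (root_order r) A s"
proof -
  obtain a0 where a0: "a0 \<in> A" using assms(2) by blast
  obtain g a b where g: "a \<le> b" "isometric_on {a..b} g" "g b = r"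
    and cone: "{y. root_order r a0 y} = g ` {a..b}"
    by (rule R_tree_upper_cone_param[OF rt, of a0 r])
  define T where "T = {a..b} \<inter> g -` (\<Inter>c\<in>A. {y. root_order r c y})"
  have "closed (\<Inter>c\<in>A. {y. root_order r c y})"
    by (intro closed_INT ballI closed_root_order_cone)
  then have "closed T"
    unfolding T_def
    by (rule continuous_closed_preimage[OF isometric_on_continuous_on[OF g(2)] closed_atLeastAtMost])
  moreover have "b \<in> T"
    using g has_root_root_order unfolding T_def has_root_def by auto
  moreover have bdd: "bdd_below T" unfolding T_def by (rule bdd_belowI[of _ a]) simp
  ultimately have "Inf T \<in> T" using closed_contains_Inf by blast
  have "is_sup (root_order r) A (g (Inf T))"
    unfolding is_sup_def
  proof (intro conjI allI impI ballI)
    fix c assume "c \<in> A"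
    then show "root_order r c (g (Inf T))" using \<open>Inf T \<in> T\<close> unfolding T_def by blast
  next
    fix u assume u: "\<forall>c\<in>A. root_order r c u"
    then obtain t where t: "t \<in> {a..b}" "u = g t" using a0 cone by blast
    with u have "t \<in> T" unfolding T_def by simp
    then have "Inf T \<le> t" using bdd by (rule cInf_lower)
    with t \<open>Inf T \<in> T\<close> show "root_order r (g (Inf T)) u"
      using isometric_on_root_order[OF g(2)] g(3) unfolding T_def by blast
  qed
  then show ?thesis ..
qed

lemma R_tree_root_order_join:
  fixes r :: "'a::metric_space"
  assumes "R_tree TYPE('a)"
  shows "is_sup (root_order r) {x, y} (join (root_order r) x y)"
proof -
  obtain s where s: "is_sup (root_order r) {x, y} s"
    using R_tree_root_order_has_sup[OF assms, of "{x, y}"] by blast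
  then have "join (root_order r) x y = s" by (rule join_eqI[OF root_order_partial_order])
  with s show ?thesis by simp
qed

text \<open>The segment \<open>[x,y]\<close> is covered by the closed cones above \<open>x\<close> and above \<open>y\<close>, so by
  connectedness it contains a common upper bound \<open>q\<close>; squeezing then forces \<open>q = x \<squnion> y\<close>.\<close>
lemma R_tree_dist_root_order_join:
  fixes r x y :: "'a::metric_space"
  assumes rt: "R_tree TYPE('a)"
  shows "dist x y = dist x (join (root_order r) x y) + dist (join (root_order r) x y) y"
proof -
  define c where "c = join (root_order r) x y"
  obtain S where S: "is_segment x y S" by (rule R_tree_segment_exists[OF rt])
  have cover: "S \<subseteq> {q. root_order r x q} \<union> {q. root_order r y q}"
  proof
    fix p assume "p \<in> S"
    then have "metric_between x r p \<or> metric_between r y p"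
      using is_segment_between[OF S] R_tree_between_triangle[OF rt] by blast
    then show "p \<in> {q. root_order r x q} \<union> {q. root_order r y q}"
      unfolding root_order_def by (auto simp: metric_between_commute)
  qed
  have "x \<in> S \<inter> {q. root_order r x q}" "y \<in> S \<inter> {q. root_order r y q}"
    using is_segment_endpoints[OF S] unfolding root_order_def metric_between_def by auto
  then obtain q where q: "q \<in> S" "root_order r x q" "root_order r y q"
    using connected_closed_cover_meet[OF is_segment_connected[OF S] closed_root_order_cone
        closed_root_order_cone cover] by blast
  have c: "is_sup (root_order r) {x, y} c" unfolding c_def by (rule R_tree_root_order_join[OF rt])
  then have "root_order r c q" using q unfolding is_sup_def by blast
  moreover have "root_order r x c" "root_order r y c" using c unfolding is_sup_def by blast+
  ultimately have "metric_between x q c" "metric_between q y c"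
    using root_order_between metric_between_commute by blast+
  moreover have "metric_between x y q" using is_segment_between[OF S q(1)] .
  ultimately have "c = q" using metric_between_squeeze by blast
  with \<open>metric_between x y q\<close> show ?thesis unfolding c_def metric_between_def by simp
qed

lemma R_tree_root_order_metric_join_semilattice:
  assumes rt: "R_tree TYPE('a::metric_space)"
  shows "metric_join_semilattice (root_order (r::'a))"
  unfolding metric_join_semilattice_def join_semilattice_def
proof (intro conjI allI impI root_order_partial_order)
  fix x y :: 'a
  show "\<exists>s. is_sup (root_order r) {x, y} s" using R_tree_root_order_join[OF rt] by blast
  show "dist x y = dist x (join (root_order r) x y) + dist (join (root_order r) x y) y"
    by (rule R_tree_dist_root_order_join[OF rt])
next
  fix x y z :: 'a
  assume "root_order r x z \<and> root_order r z y"
  then show "dist x z + dist z y = dist x y"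
    using root_order_between unfolding metric_between_def by blast
qed

theorem theorem1:
  assumes "geodesic_space TYPE('a::metric_space)"
  shows "(R_tree TYPE('a) \<longrightarrow>
           (\<forall>r::'a.
              (\<exists>!le. metric_join_semilattice le \<and> upper_semilinear le \<and> has_root le r) \<and>
              (\<forall>le. metric_join_semilattice le \<and> upper_semilinear le \<and> has_root le r \<longrightarrow>
                 (\<forall>A::'a set. A \<noteq> {} \<longrightarrow> (\<exists>s. is_sup le A s)))))
       \<and> (\<forall>le::'a \<Rightarrow> 'a \<Rightarrow> bool. metric_join_semilattice le \<and> upper_semilinear le \<longrightarrow> R_tree TYPE('a))"
proof (intro conjI impI allI)
  fix r :: 'a
  assume rt: "R_tree TYPE('a)"
  have unique: "le = root_order r"
    if "metric_join_semilattice le \<and> upper_semilinear le \<and> has_root le r" for le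
  proof -
    interpret semilinear_metric_semilattice le using that by unfold_locales blast+
    show ?thesis using that by (blast intro: eq_root_order)
  qed
  show "\<exists>!le. metric_join_semilattice le \<and> upper_semilinear le \<and> has_root le r"
    using R_tree_root_order_metric_join_semilattice[OF rt] R_tree_root_order_upper_semilinear[OF rt]
      has_root_root_order unique by blast
  fix le and A :: "'a set"
  assume "metric_join_semilattice le \<and> upper_semilinear le \<and> has_root le r" "A \<noteq> {}"
  then show "\<exists>s. is_sup le A s" using unique R_tree_root_order_has_sup[OF rt] by blast
next
  fix le :: "'a \<Rightarrow> 'a \<Rightarrow> bool"
  assume "metric_join_semilattice le \<and> upper_semilinear le"
  then interpret semilinear_metric_semilattice le by unfold_locales blast+
  show "R_tree TYPE('a)" using assms by (rule R_tree_if_geodesic)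
qed

end
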